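(* Let $\Upsilon$ be a tree and let $\|\cdot\|$ be an equivalent norm on $C_0(\Upsilon)$ with the Kadec property. Then the associated function $\mu:\Upsilon\to\mathbb{R}$, $\mu(t)=\inf\{\|\mathbf{1}_{(0,t]}+f'\|: f'\in C_0(\Upsilon),\ \operatorname{supp}f'\subseteq(t,\infty)\}$, has no bad points.
   Context: A tree is a partially ordered set $(\Upsilon,\preceq)$ such that for each $t$ the set $(0,t]=\{s:s\preceq t\}$ is well-ordered; write $(0,t)=\{s:s\prec t\}$, $(t,\infty)=\{u:t\prec u\}$, and let $r(t)$ be the order type of $(0,t)$. Trees are assumed Hausdorff: if $r(t)$ is a limit ordinal and $(0,t)=(0,t')$ then $t=t'$. $\Upsilon$ carries the coarsest topology in which every $(0,t]$ is open and closed, and $C_0(\Upsilon)$ is the space of continuous $f:\Upsilon\to\mathbb{R}$ with $\{|f|\ge\epsilon\}$ compact for every $\epsilon>0$, with the supremum norm; $\mathbf{1}_{(0,t]}$ is the indicator function and $\operatorname{supp}f=\{s:f(s)\ne0\}$. The set $t^+$ of immediate successors of $t$ consists of those $u$ with $(0,u)=(0,t]$. The function $\mu$ is increasing. For an increasing $\rho$, $t$ is good for $\rho$ if there is a finite $F\subseteq t^+$ with $\inf_{u\in t^+\setminus F}\rho(u)>\rho(t)$ (infimum over the empty set $=+\infty$); otherwise bad. A norm has the Kadec property if the weak and norm topologies coincide on its unit sphere. *)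

theory Defs
  imports "HOL-Analysis.Analysis" "HOL-Library.Extended_Real"
begin

definition lt_of :: "('a \<Rightarrow> 'a \<Rightarrow> bool) \<Rightarrow> 'a \<Rightarrow> 'a \<Rightarrow> bool" where
  "lt_of le s t \<longleftrightarrow> le s t \<and> s \<noteq> t"

definition is_tree :: "('a \<Rightarrow> 'a \<Rightarrow> bool) \<Rightarrow> bool" where
  "is_tree le \<longleftrightarrow>
     (\<forall>x. le x x) \<and> (\<forall>x y. le x y \<and> le y x \<longrightarrow> x = y) \<and>
     (\<forall>x y z. le x y \<and> le y z \<longrightarrow> le x z) \<and>
     \<comment> \<open>each (0,t] is well-ordered: a chain in which every nonempty subset has a least element\<close>
     (\<forall>t. (\<forall>a b. le a t \<and> le b t \<longrightarrow> le a b \<or> le b a) \<and>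
          (\<forall>A. A \<subseteq> {s. le s t} \<and> A \<noteq> {} \<longrightarrow> (\<exists>m\<in>A. \<forall>a\<in>A. le m a)))"

text \<open>r(t) is a limit ordinal: (0,t) is nonempty and has no greatest element.\<close>
definition limit_height :: "('a \<Rightarrow> 'a \<Rightarrow> bool) \<Rightarrow> 'a \<Rightarrow> bool" where
  "limit_height le t \<longleftrightarrow> {s. lt_of le s t} \<noteq> {} \<and>
     \<not> (\<exists>m. lt_of le m t \<and> (\<forall>s. lt_of le s t \<longrightarrow> le s m))"

definition hausdorff_tree :: "('a \<Rightarrow> 'a \<Rightarrow> bool) \<Rightarrow> bool" where
  "hausdorff_tree le \<longleftrightarrow> is_tree le \<and>
     (\<forall>t t'. limit_height le t \<and> {s. lt_of le s t} = {s. lt_of le s t'} \<longrightarrow> t = t')"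

definition tree_topology :: "('a \<Rightarrow> 'a \<Rightarrow> bool) \<Rightarrow> 'a topology" where
  "tree_topology le = topology_generated_by
     ({{s. le s t} | t. True} \<union> {- {s. le s t} | t. True})"

definition C0 :: "('a \<Rightarrow> 'a \<Rightarrow> bool) \<Rightarrow> ('a \<Rightarrow> real) set" where
  "C0 le = {f. continuous_map (tree_topology le) euclideanreal f \<and>
              (\<forall>\<epsilon>>0. compactin (tree_topology le) {s. \<epsilon> \<le> \<bar>f s\<bar>})}"

definition sup_norm :: "('a \<Rightarrow> real) \<Rightarrow> real" where
  "sup_norm f = (SUP s. \<bar>f s\<bar>)"

definition equivalent_norm :: "('a \<Rightarrow> 'a \<Rightarrow> bool) \<Rightarrow> (('a \<Rightarrow> real) \<Rightarrow> real) \<Rightarrow> bool" where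
  "equivalent_norm le N \<longleftrightarrow>
     (\<forall>f\<in>C0 le. 0 \<le> N f \<and> (N f = 0 \<longleftrightarrow> f = (\<lambda>_. 0))) \<and>
     (\<forall>f\<in>C0 le. \<forall>c. N (\<lambda>s. c * f s) = \<bar>c\<bar> * N f) \<and>
     (\<forall>f\<in>C0 le. \<forall>g\<in>C0 le. N (\<lambda>s. f s + g s) \<le> N f + N g) \<and>
     (\<exists>c C. 0 < c \<and> (\<forall>f\<in>C0 le. c * sup_norm f \<le> N f \<and> N f \<le> C * sup_norm f))"

definition norm_topology :: "('a \<Rightarrow> 'a \<Rightarrow> bool) \<Rightarrow> (('a \<Rightarrow> real) \<Rightarrow> real) \<Rightarrow> ('a \<Rightarrow> real) topology" where
  "norm_topology le N = topology_generated_by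
     {{g \<in> C0 le. N (\<lambda>s. g s - f s) < r} | f r. f \<in> C0 le \<and> 0 < r}"

definition dual_space :: "('a \<Rightarrow> 'a \<Rightarrow> bool) \<Rightarrow> (('a \<Rightarrow> real) \<Rightarrow> real) \<Rightarrow> (('a \<Rightarrow> real) \<Rightarrow> real) set" where
  "dual_space le N = {\<phi>.
     (\<forall>f\<in>C0 le. \<forall>g\<in>C0 le. \<forall>a b. \<phi> (\<lambda>s. a * f s + b * g s) = a * \<phi> f + b * \<phi> g) \<and>
     (\<exists>K. \<forall>f\<in>C0 le. \<bar>\<phi> f\<bar> \<le> K * N f)}"

definition weak_topology :: "('a \<Rightarrow> 'a \<Rightarrow> bool) \<Rightarrow> (('a \<Rightarrow> real) \<Rightarrow> real) \<Rightarrow> ('a \<Rightarrow> real) topology" where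
  "weak_topology le N = topology_generated_by
     {{g \<in> C0 le. \<phi> g \<in> U} | \<phi> U. \<phi> \<in> dual_space le N \<and> open U}"

definition kadec :: "('a \<Rightarrow> 'a \<Rightarrow> bool) \<Rightarrow> (('a \<Rightarrow> real) \<Rightarrow> real) \<Rightarrow> bool" where
  "kadec le N \<longleftrightarrow>
     subtopology (weak_topology le N) {f \<in> C0 le. N f = 1} =
     subtopology (norm_topology le N) {f \<in> C0 le. N f = 1}"

definition mu :: "('a \<Rightarrow> 'a \<Rightarrow> bool) \<Rightarrow> (('a \<Rightarrow> real) \<Rightarrow> real) \<Rightarrow> 'a \<Rightarrow> real" where
  "mu le N t = Inf {N (\<lambda>s. (if le s t then 1 else 0) + f' s) | f'.
       f' \<in> C0 le \<and> {s. f' s \<noteq> 0} \<subseteq> {u. lt_of le t u}}"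

definition succs :: "('a \<Rightarrow> 'a \<Rightarrow> bool) \<Rightarrow> 'a \<Rightarrow> 'a set" where
  "succs le t = {u. {s. lt_of le s u} = {s. le s t}}"

definition good_point :: "('a \<Rightarrow> 'a \<Rightarrow> bool) \<Rightarrow> ('a \<Rightarrow> real) \<Rightarrow> 'a \<Rightarrow> bool" where
  "good_point le \<rho> t \<longleftrightarrow> (\<exists>F. finite F \<and> F \<subseteq> succs le t \<and>
      (INF u\<in>succs le t - F. ereal (\<rho> u)) > ereal (\<rho> t))"

definition bad_point :: "('a \<Rightarrow> 'a \<Rightarrow> bool) \<Rightarrow> ('a \<Rightarrow> real) \<Rightarrow> 'a \<Rightarrow> bool" where
  "bad_point le \<rho> t \<longleftrightarrow> \<not> good_point le \<rho> t"

end

theory Submission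
  imports Defs
begin

(* Suppose t were bad. Then there are infinitely many distinct immediate successors u_n
   of t and functions f_n supported in (u_n, \<infinity>) with
   \<parallel>1_(0,u_n] + f_n\<parallel> \<rightarrow> \<mu>(t) \<le> \<parallel>1_(0,t]\<parallel>. The differences h_n = 1_(0,u_n] + f_n - 1_(0,t]
   have the pairwise disjoint supports [u_n, \<infinity>) and are uniformly bounded, so they are
   weakly null, while h_n(u_n) = 1. Normalising e + r_n h_n, with e = 1_(0,t] and r_n \<ge> 1
   bounded, gives points of the unit sphere converging weakly to e / \<parallel>e\<parallel> but staying at
   distance about 1 / \<parallel>e\<parallel> from it in the supremum norm, against the Kadec property.
   That 1_(0,t] lies in C_0 at all rests on the compactness of (0,t], which follows from
   the Alexander subbase theorem and the Hausdorff condition. *)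

section \<open>Subbases\<close>

lemma subtopology_topology_generated_by:
  assumes "U \<subseteq> \<Union>\<S>"
  shows "subtopology (topology_generated_by \<S>) U =
    topology (arbitrary union_of (finite intersection_of (\<lambda>B. B \<in> \<S>) relative_to U))"
proof -
  let ?P = "finite intersection_of (\<lambda>B. B \<in> \<S>) relative_to U"
  let ?P' = "finite' intersection_of (\<lambda>B. B \<in> \<S>) relative_to U"
  have P_union_P': "(arbitrary union_of ?P') V" if "?P V" for V
  proof (cases "V = U")
    case True
    have "?P' (U \<inter> B)" if "B \<in> \<S>" for B
      using that by (auto simp: relative_to_def intersection_of_def intro!: exI[of _ "{B}"])
    then have "(arbitrary union_of ?P') (\<Union>B\<in>\<S>. U \<inter> B)"
      by (intro arbitrary_union_of_Union) (auto intro: arbitrary_union_of_inc)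
    moreover have "(\<Union>B\<in>\<S>. U \<inter> B) = U" using assms by blast
    ultimately show ?thesis using True by simp
  next
    case False
    then have "?P' V" using that
      by (auto simp: relative_to_def intersection_of_def)
    then show ?thesis by (rule arbitrary_union_of_inc)
  qed
  have "arbitrary union_of ?P = arbitrary union_of ?P'"
  proof (intro ext iffI)
    fix V
    assume "(arbitrary union_of ?P) V"
    then have "(arbitrary union_of (arbitrary union_of ?P')) V"
      using P_union_P' by (rule union_of_mono)
    then show "(arbitrary union_of ?P') V" by simp
  next
    fix V
    assume "(arbitrary union_of ?P') V"
    then show "(arbitrary union_of ?P) V"
      by (rule union_of_mono) (auto simp: relative_to_def intersection_of_def)
  qed
  moreover have "openin (subtopology (topology_generated_by \<S>) U) V \<longleftrightarrow> (arbitrary union_of ?P') V"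
    for V
    unfolding openin_subtopology openin_topology_generated_by_iff
    unfolding generate_topology_on_eq arbitrary_union_of_relative_to[symmetric]
    by (auto simp: relative_to_def)
  ultimately show ?thesis
    unfolding topology_eq openin_subbase by simp
qed

lemma compactin_topology_generated_by:
  assumes "U \<subseteq> \<Union>\<S>"
    and "\<And>\<C>. \<C> \<subseteq> \<S> \<Longrightarrow> U \<subseteq> \<Union>\<C> \<Longrightarrow> \<exists>\<C>'. finite \<C>' \<and> \<C>' \<subseteq> \<C> \<and> U \<subseteq> \<Union>\<C>'"
  shows "compactin (topology_generated_by \<S>) U"
  unfolding compactin_subspace
  using Alexander_subbase_alt[OF assms subtopology_topology_generated_by[OF assms(1), symmetric]]
    assms(1) by simp

lemma eventually_in_topology_generated_by:
  assumes "openin (topology_generated_by \<S>) W" "x \<in> W"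
    and "\<And>B. B \<in> \<S> \<Longrightarrow> x \<in> B \<Longrightarrow> eventually (\<lambda>n. w n \<in> B) F"
  shows "eventually (\<lambda>n. w n \<in> W) F"
  using assms(1)[unfolded openin_topology_generated_by_iff] assms(2)
proof induction
  case (Int a b)
  then have "eventually (\<lambda>n. w n \<in> a) F" "eventually (\<lambda>n. w n \<in> b) F"
    using assms(3) by auto
  then show ?case by eventually_elim simp
next
  case (UN K)
  then obtain k where "k \<in> K" "x \<in> k" by blast
  with UN.IH assms(3) have "eventually (\<lambda>n. w n \<in> k) F" by blast
  then show ?case by eventually_elim (use \<open>k \<in> K\<close> in blast)
qed (use assms(3) in auto)

section \<open>Trees\<close>

context
  fixes le :: "'a \<Rightarrow> 'a \<Rightarrow> bool"
  assumes tree: "is_tree le"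
begin

lemma tree_refl: "le x x"
  using tree unfolding is_tree_def by simp

lemma tree_antisym: "le x y \<Longrightarrow> le y x \<Longrightarrow> x = y"
  using tree unfolding is_tree_def by (elim conjE) metis

lemma tree_trans: "le x y \<Longrightarrow> le y z \<Longrightarrow> le x z"
  using tree unfolding is_tree_def by (elim conjE) metis

lemma tree_chain: "le a t \<Longrightarrow> le b t \<Longrightarrow> le a b \<or> le b a"
  using tree unfolding is_tree_def by (elim conjE) metis

lemma tree_least: "A \<subseteq> {s. le s t} \<Longrightarrow> A \<noteq> {} \<Longrightarrow> \<exists>m\<in>A. \<forall>a\<in>A. le m a"
  using tree unfolding is_tree_def by (elim conjE) metis

lemma predecessors_least_outside_downset:
  assumes "D \<subseteq> {s. le s t}" and down: "\<And>x y. le x y \<Longrightarrow> y \<in> D \<Longrightarrow> x \<in> D"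
    and "le q t" "q \<notin> D" and least: "\<And>r. le r t \<Longrightarrow> r \<notin> D \<Longrightarrow> le q r"
  shows "{s. lt_of le s q} = D"
proof (intro equalityI subsetI)
  fix s
  assume "s \<in> {s. lt_of le s q}"
  then have "le s q" "s \<noteq> q" by (auto simp: lt_of_def)
  show "s \<in> D"
  proof (rule ccontr)
    assume "s \<notin> D"
    then have "le q s" using least tree_trans[OF \<open>le s q\<close> \<open>le q t\<close>] by blast
    then show False using tree_antisym \<open>le s q\<close> \<open>s \<noteq> q\<close> by blast
  qed
next
  fix s
  assume "s \<in> D"
  then have "le s q \<or> le q s" using assms(1,3) tree_chain by blast
  moreover have "\<not> le q s" using down \<open>s \<in> D\<close> \<open>q \<notin> D\<close> by blast
  ultimately show "s \<in> {s. lt_of le s q}" using \<open>s \<in> D\<close> \<open>q \<notin> D\<close> by (auto simp: lt_of_def)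
qed

lemma succs_downset_iff: "u \<in> succs le t \<Longrightarrow> le s u \<longleftrightarrow> le s t \<or> s = u"
  unfolding succs_def lt_of_def using tree_refl by blast

end

lemma succs_not_le: "u \<in> succs le t \<Longrightarrow> \<not> le u t"
  unfolding succs_def lt_of_def by blast

lemma succs_common_upper_bound:
  assumes "is_tree le" "u \<in> succs le t" "v \<in> succs le t" "le u s" "le v s"
  shows "u = v"
proof (rule ccontr)
  assume "u \<noteq> v"
  from assms(4,5) have "le u v \<or> le v u" by (rule tree_chain[OF assms(1)])
  then show False
    using \<open>u \<noteq> v\<close> assms(2,3) succs_downset_iff[OF assms(1)] succs_not_le by metis
qed

context
  fixes le :: "'a \<Rightarrow> 'a \<Rightarrow> bool"
  assumes haus: "hausdorff_tree le"
begin

lemma hausdorff_treeD: "is_tree le"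
  using haus unfolding hausdorff_tree_def by simp

lemma hausdorff_tree_predecessors_eq:
  "limit_height le q \<Longrightarrow> {s. lt_of le s q} = {s. lt_of le s v} \<Longrightarrow> q = v"
  using haus unfolding hausdorff_tree_def by blast

text \<open>An initial segment \<open>D\<close> without largest element is the set of predecessors of the
  least point of \<open>(0,t] - D\<close> and also of the least point of \<open>(0,s] - D\<close>; by the Hausdorff
  property these two points coincide.\<close>
lemma least_outside_limit_segment_le:
  assumes "D \<noteq> {}" and no_max: "\<not> (\<exists>p\<in>D. \<forall>d\<in>D. le d p)"
    and down: "\<And>x y. le x y \<Longrightarrow> y \<in> D \<Longrightarrow> x \<in> D"
    and D_t: "D \<subseteq> {x. le x t}" and D_s: "D \<subseteq> {x. le x s}" "s \<notin> D"
    and q: "le q t" "q \<notin> D" and q_least: "\<And>r. le r t \<Longrightarrow> r \<notin> D \<Longrightarrow> le q r"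
  shows "le q s"
proof -
  have preds_q: "{x. lt_of le x q} = D"
    using predecessors_least_outside_downset[OF hausdorff_treeD D_t down q q_least] .
  then have "lt_of le x q \<longleftrightarrow> x \<in> D" for x by blast
  then have "limit_height le q"
    unfolding limit_height_def using \<open>D \<noteq> {}\<close> no_max by auto
  obtain v where v: "le v s" "v \<notin> D" and v_least: "\<And>r. le r s \<Longrightarrow> r \<notin> D \<Longrightarrow> le v r"
    using tree_least[OF hausdorff_treeD, of "{x. le x s} - D" s] tree_refl[OF hausdorff_treeD] D_s(2)
    by blast
  have "{x. lt_of le x v} = D"
    using predecessors_least_outside_downset[OF hausdorff_treeD D_s(1) down v v_least] .
  then have "q = v"
    using hausdorff_tree_predecessors_eq[OF \<open>limit_height le q\<close>] preds_q by simp
  with v show ?thesis by simp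
qed

lemma lower_bounds_empty_or_max:
  fixes t :: 'a and S :: "'a set"
  defines "D \<equiv> {r. le r t \<and> (\<forall>s\<in>S. le r s)}"
  shows "D = {} \<or> (\<exists>p\<in>D. \<forall>d\<in>D. le d p)"
proof (rule ccontr)
  assume "\<not> ?thesis"
  then have "D \<noteq> {}" and no_max: "\<not> (\<exists>p\<in>D. \<forall>d\<in>D. le d p)" by auto
  have D_t: "D \<subseteq> {x. le x t}" unfolding D_def by blast
  have down: "x \<in> D" if "le x y" "y \<in> D" for x y
    using that tree_trans[OF hausdorff_treeD] unfolding D_def by blast
  have "t \<notin> D" using no_max D_t by blast
  then obtain q where q: "le q t" "q \<notin> D" and q_least: "\<And>r. le r t \<Longrightarrow> r \<notin> D \<Longrightarrow> le q r"
    using tree_least[OF hausdorff_treeD, of "{s. le s t} - D" t] tree_refl[OF hausdorff_treeD]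
    by blast
  then obtain s0 where "s0 \<in> S" "\<not> le q s0" unfolding D_def by blast
  have D_s0: "D \<subseteq> {x. le x s0}" using \<open>s0 \<in> S\<close> unfolding D_def by blast
  then have "s0 \<notin> D" using no_max by blast
  have "le q s0"
    by (rule least_outside_limit_segment_le[OF \<open>D \<noteq> {}\<close> no_max down D_t D_s0 \<open>s0 \<notin> D\<close> q q_least])
  with \<open>\<not> le q s0\<close> show False ..
qed

text \<open>The points of \<open>(0,t]\<close> outside every complemented set of the cover form an initial
  segment \<open>D\<close>, covered by a single downset as it is empty or has a largest element. The
  rest of \<open>(0,t]\<close> lies in the complemented set that contains its least point.\<close>
lemma downset_subbase_cover_finite:
  assumes cover: "{s. le s t} \<subseteq> (\<Union>s\<in>S1. {x. le x s}) \<union> (\<Union>s\<in>S2. - {x. le x s})"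
  shows "\<exists>F1 F2. finite F1 \<and> F1 \<subseteq> S1 \<and> finite F2 \<and> F2 \<subseteq> S2 \<and>
    {s. le s t} \<subseteq> (\<Union>s\<in>F1. {x. le x s}) \<union> (\<Union>s\<in>F2. - {x. le x s})"
proof -
  define D where "D = {r. le r t \<and> (\<forall>s\<in>S2. le r s)}"
  have "\<exists>F2. finite F2 \<and> F2 \<subseteq> S2 \<and> {s. le s t} - D \<subseteq> (\<Union>s\<in>F2. - {x. le x s})"
  proof (cases "{s. le s t} \<subseteq> D")
    case False
    then obtain q where "le q t" "q \<notin> D" and q_least: "\<forall>r\<in>{s. le s t} - D. le q r"
      using tree_least[OF hausdorff_treeD, of "{s. le s t} - D" t] by blast
    then obtain s0 where "s0 \<in> S2" "\<not> le q s0" unfolding D_def by blast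
    then have "{s. le s t} - D \<subseteq> - {x. le x s0}"
      using q_least tree_trans[OF hausdorff_treeD] by blast
    then show ?thesis using \<open>s0 \<in> S2\<close> by (intro exI[of _ "{s0}"]) auto
  qed auto
  then obtain F2 where "finite F2" "F2 \<subseteq> S2" and F2: "{s. le s t} - D \<subseteq> (\<Union>s\<in>F2. - {x. le x s})"
    by blast
  have "\<exists>F1. finite F1 \<and> F1 \<subseteq> S1 \<and> D \<subseteq> (\<Union>s\<in>F1. {x. le x s})"
  proof (cases "D = {}")
    case False
    then obtain p s1 where "p \<in> D" "\<forall>d\<in>D. le d p" "s1 \<in> S1" "le p s1"
      using lower_bounds_empty_or_max[of t S2] cover unfolding D_def by blast
    then have "D \<subseteq> {x. le x s1}" using tree_trans[OF hausdorff_treeD] by blast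
    then show ?thesis using \<open>s1 \<in> S1\<close> by (intro exI[of _ "{s1}"]) auto
  qed auto
  then obtain F1 where "finite F1" "F1 \<subseteq> S1" and F1: "D \<subseteq> (\<Union>s\<in>F1. {x. le x s})"
    by blast
  show ?thesis
  proof (intro exI conjI)
    show "{s. le s t} \<subseteq> (\<Union>s\<in>F1. {x. le x s}) \<union> (\<Union>s\<in>F2. - {x. le x s})"
      using F1 F2 by blast
  qed fact+
qed

lemma compactin_downset: "compactin (tree_topology le) {s. le s t}"
  unfolding tree_topology_def
proof (rule compactin_topology_generated_by)
  let ?\<S> = "{{s. le s t} |t. True} \<union> {- {s. le s t} |t. True}"
  show "{s. le s t} \<subseteq> \<Union>?\<S>" by blast
  fix \<C>
  assume "\<C> \<subseteq> ?\<S>" and "{s. le s t} \<subseteq> \<Union>\<C>"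
  define S1 where "S1 = {s. {x. le x s} \<in> \<C>}"
  define S2 where "S2 = {s. - {x. le x s} \<in> \<C>}"
  have "\<Union>\<C> \<subseteq> (\<Union>s\<in>S1. {x. le x s}) \<union> (\<Union>s\<in>S2. - {x. le x s})"
  proof (rule Union_least)
    fix B
    assume "B \<in> \<C>"
    then have "B \<in> ?\<S>" using \<open>\<C> \<subseteq> ?\<S>\<close> ..
    then obtain s where "B = {x. le x s} \<or> B = - {x. le x s}"
      by auto
    then show "B \<subseteq> (\<Union>s\<in>S1. {x. le x s}) \<union> (\<Union>s\<in>S2. - {x. le x s})"
      using \<open>B \<in> \<C>\<close> unfolding S1_def S2_def by auto
  qed
  with \<open>{s. le s t} \<subseteq> \<Union>\<C>\<close> have cover_S:
    "{s. le s t} \<subseteq> (\<Union>s\<in>S1. {x. le x s}) \<union> (\<Union>s\<in>S2. - {x. le x s})"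
    by (rule order_trans)
  obtain F1 F2 where "finite F1" "F1 \<subseteq> S1" "finite F2" "F2 \<subseteq> S2"
      and cover_F: "{s. le s t} \<subseteq> (\<Union>s\<in>F1. {x. le x s}) \<union> (\<Union>s\<in>F2. - {x. le x s})"
    using downset_subbase_cover_finite[OF cover_S] by blast
  let ?\<C>' = "(\<lambda>s. {x. le x s}) ` F1 \<union> (\<lambda>s. - {x. le x s}) ` F2"
  have "finite ?\<C>'" using \<open>finite F1\<close> \<open>finite F2\<close> by simp
  moreover have "?\<C>' \<subseteq> \<C>" using \<open>F1 \<subseteq> S1\<close> \<open>F2 \<subseteq> S2\<close> by (auto simp: S1_def S2_def)
  moreover have "{s. le s t} \<subseteq> \<Union>?\<C>'" using cover_F by auto
  ultimately show "\<exists>\<C>'. finite \<C>' \<and> \<C>' \<subseteq> \<C> \<and> {s. le s t} \<subseteq> \<Union>\<C>'" by blast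
qed

end

section \<open>The space \<open>C\<^sub>0\<close>\<close>

lemma openin_tree_topology_downset: "openin (tree_topology le) {s. le s t}"
  unfolding tree_topology_def by (rule topology_generated_by_Basis) blast

lemma openin_tree_topology_downset_compl: "openin (tree_topology le) (- {s. le s t})"
  unfolding tree_topology_def by (rule topology_generated_by_Basis) blast

lemma topspace_tree_topology [simp]: "topspace (tree_topology le) = UNIV"
  unfolding tree_topology_def by auto

lemma continuous_map_downset_indicator:
  "continuous_map (tree_topology le) euclideanreal (\<lambda>s. if le s t then 1 else 0)"
  unfolding continuous_map_def
proof (intro conjI allI impI)
  fix U :: "real set"
  have "{s \<in> topspace (tree_topology le). (if le s t then 1 else 0) \<in> U} =
      (if 1 \<in> U then {s. le s t} else {}) \<union> (if 0 \<in> U then - {s. le s t} else {})"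
    by auto
  then show "openin (tree_topology le) {s \<in> topspace (tree_topology le). (if le s t then 1 else 0) \<in> U}"
    using openin_tree_topology_downset openin_tree_topology_downset_compl
      openin_topspace[of "tree_topology le"] by auto
qed auto

lemma C0_zero: "(\<lambda>s. 0) \<in> C0 le"
  unfolding C0_def by auto

lemma C0_add:
  assumes "f \<in> C0 le" "g \<in> C0 le"
  shows "(\<lambda>s. f s + g s) \<in> C0 le"
proof -
  have cont: "continuous_map (tree_topology le) euclideanreal (\<lambda>s. f s + g s)"
    using assms by (intro continuous_map_add) (auto simp: C0_def)
  have "compactin (tree_topology le) {s. \<epsilon> \<le> \<bar>f s + g s\<bar>}" if "\<epsilon> > 0" for \<epsilon>
  proof (rule closed_compactin)
    have "\<epsilon>/2 > 0" using that by simp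
    then show "compactin (tree_topology le) ({s. \<epsilon>/2 \<le> \<bar>f s\<bar>} \<union> {s. \<epsilon>/2 \<le> \<bar>g s\<bar>})"
      using assms unfolding C0_def by (blast intro: compactin_Un)
    show "{s. \<epsilon> \<le> \<bar>f s + g s\<bar>} \<subseteq> {s. \<epsilon>/2 \<le> \<bar>f s\<bar>} \<union> {s. \<epsilon>/2 \<le> \<bar>g s\<bar>}"
      by auto
    have "closed {y::real. \<epsilon> \<le> \<bar>y\<bar>}"
      by (intro closed_Collect_le continuous_intros)
    then have "closedin euclideanreal {y::real. \<epsilon> \<le> \<bar>y\<bar>}" by simp
    from closedin_continuous_map_preimage[OF cont this]
    show "closedin (tree_topology le) {s. \<epsilon> \<le> \<bar>f s + g s\<bar>}" by simp
  qed
  with cont show ?thesis unfolding C0_def by blast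
qed

lemma C0_scale:
  assumes "f \<in> C0 le"
  shows "(\<lambda>s. a * f s) \<in> C0 le"
proof (cases "a = 0")
  case False
  have "{s. \<epsilon> \<le> \<bar>a * f s\<bar>} = {s. \<epsilon> / \<bar>a\<bar> \<le> \<bar>f s\<bar>}" for \<epsilon>
    using False by (auto simp: abs_mult field_simps)
  with assms False show ?thesis
    unfolding C0_def by (auto intro: continuous_map_real_mult_left)
qed (simp add: C0_zero)

lemma C0_diff: "f \<in> C0 le \<Longrightarrow> g \<in> C0 le \<Longrightarrow> (\<lambda>s. f s - g s) \<in> C0 le"
  using C0_add[of f le "\<lambda>s. (-1) * g s"] C0_scale[of g le "-1"] by simp

lemma C0_sum:
  "finite I \<Longrightarrow> (\<And>i. i \<in> I \<Longrightarrow> h i \<in> C0 le) \<Longrightarrow> (\<lambda>s. \<Sum>i\<in>I. a i * h i s) \<in> C0 le"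
proof (induction I rule: finite_induct)
  case (insert i I)
  then show ?case
    using C0_add[OF C0_scale[of "h i" le "a i"], of "\<lambda>s. \<Sum>i\<in>I. a i * h i s"] by simp
qed (simp add: C0_zero)

lemma C0_bounded:
  assumes "f \<in> C0 le"
  obtains B where "\<And>s. \<bar>f s\<bar> \<le> B"
proof -
  have "compactin euclideanreal (f ` {s. 1 \<le> \<bar>f s\<bar>})"
    using assms unfolding C0_def by (intro image_compactin[of "tree_topology le"]) auto
  then obtain B where B: "\<And>s. 1 \<le> \<bar>f s\<bar> \<Longrightarrow> \<bar>f s\<bar> \<le> B"
    by (fastforce simp: compactin_euclidean_iff bounded_iff dest: compact_imp_bounded)
  show thesis
  proof (rule that)
    show "\<bar>f s\<bar> \<le> max B 1" for s using B[of s] by linarith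
  qed
qed

lemma abs_le_sup_norm:
  assumes "f \<in> C0 le"
  shows "\<bar>f s\<bar> \<le> sup_norm f"
proof -
  obtain B where "\<And>s. \<bar>f s\<bar> \<le> B" using C0_bounded[OF assms] by blast
  then have "bdd_above (range (\<lambda>s. \<bar>f s\<bar>))" by (intro bdd_aboveI[of _ B]) auto
  then show ?thesis unfolding sup_norm_def by (rule cSUP_upper[OF UNIV_I])
qed

lemma sup_norm_le: "(\<And>s. \<bar>f s\<bar> \<le> B) \<Longrightarrow> sup_norm f \<le> B"
  unfolding sup_norm_def by (rule cSUP_least) auto

lemma downset_indicator_C0:
  assumes "hausdorff_tree le"
  shows "(\<lambda>s. if le s t then 1 else 0) \<in> C0 le"
proof -
  have "{s. \<epsilon> \<le> \<bar>if le s t then 1 else 0 :: real\<bar>} = (if \<epsilon> \<le> 1 then {s. le s t} else {})"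
    if "\<epsilon> > 0" for \<epsilon>
    using that by auto
  then show ?thesis
    unfolding C0_def using continuous_map_downset_indicator compactin_downset[OF assms] by auto
qed

section \<open>Equivalent norms and the weak topology\<close>

context
  fixes le :: "'a \<Rightarrow> 'a \<Rightarrow> bool" and N :: "('a \<Rightarrow> real) \<Rightarrow> real"
  assumes norm: "equivalent_norm le N"
begin

lemma equivalent_norm_nonneg: "f \<in> C0 le \<Longrightarrow> 0 \<le> N f"
  using norm unfolding equivalent_norm_def by blast

lemma equivalent_norm_zero: "N (\<lambda>s. 0) = 0"
  using norm C0_zero unfolding equivalent_norm_def by blast

lemma equivalent_norm_scale: "f \<in> C0 le \<Longrightarrow> N (\<lambda>s. a * f s) = \<bar>a\<bar> * N f"
  using norm unfolding equivalent_norm_def by blast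

lemma equivalent_norm_triangle:
  "f \<in> C0 le \<Longrightarrow> g \<in> C0 le \<Longrightarrow> N (\<lambda>s. f s + g s) \<le> N f + N g"
  using norm unfolding equivalent_norm_def by blast

lemma equivalent_norm_pos: "f \<in> C0 le \<Longrightarrow> f s \<noteq> 0 \<Longrightarrow> N f > 0"
  using norm unfolding equivalent_norm_def by (metis order_le_less)

lemma equivalent_norm_pointwise_bound:
  obtains c where "c > 0" "\<And>f s. f \<in> C0 le \<Longrightarrow> c * \<bar>f s\<bar> \<le> N f"
proof -
  obtain c where "c > 0" and c: "\<And>f. f \<in> C0 le \<Longrightarrow> c * sup_norm f \<le> N f"
    using norm unfolding equivalent_norm_def by blast
  show thesis
  proof (rule that)
    fix f s
    assume f: "f \<in> C0 le"
    have "c * \<bar>f s\<bar> \<le> c * sup_norm f"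
      using abs_le_sup_norm[OF f] \<open>c > 0\<close> by (simp add: mult_left_mono)
    also have "\<dots> \<le> N f" by (rule c[OF f])
    finally show "c * \<bar>f s\<bar> \<le> N f" .
  qed (rule \<open>c > 0\<close>)
qed

lemma equivalent_norm_sup_bound:
  obtains K where "\<And>f B. f \<in> C0 le \<Longrightarrow> (\<And>s. \<bar>f s\<bar> \<le> B) \<Longrightarrow> N f \<le> K * B"
proof -
  obtain C where C: "\<And>f. f \<in> C0 le \<Longrightarrow> N f \<le> C * sup_norm f"
    using norm unfolding equivalent_norm_def by blast
  show thesis
  proof (rule that)
    fix f B
    assume f: "f \<in> C0 le" and bound: "\<And>s. \<bar>f s\<bar> \<le> B"
    have "0 \<le> sup_norm f" using abs_le_sup_norm[OF f] abs_ge_zero order_trans by blast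
    have "N f \<le> C * sup_norm f" by (rule C[OF f])
    also have "\<dots> \<le> \<bar>C\<bar> * sup_norm f" using \<open>0 \<le> sup_norm f\<close> by (intro mult_right_mono) auto
    also have "\<dots> \<le> \<bar>C\<bar> * B" using sup_norm_le[OF bound] by (intro mult_left_mono) auto
    finally show "N f \<le> \<bar>C\<bar> * B" .
  qed
qed

lemma continuous_on_equivalent_norm_line:
  assumes "e \<in> C0 le" "h \<in> C0 le"
  shows "continuous_on A (\<lambda>r. N (\<lambda>s. e s + r * h s))"
proof (rule lipschitz_on_continuous_on)
  have line: "(\<lambda>s. e s + r * h s) \<in> C0 le" for r
    using assms by (intro C0_add C0_scale)
  have "N (\<lambda>s. e s + r * h s) \<le> N (\<lambda>s. e s + r' * h s) + \<bar>r - r'\<bar> * N h" for r r'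
  proof -
    have "N (\<lambda>s. e s + r * h s) = N (\<lambda>s. (e s + r' * h s) + (r - r') * h s)"
      by (simp add: algebra_simps)
    also have "\<dots> \<le> N (\<lambda>s. e s + r' * h s) + N (\<lambda>s. (r - r') * h s)"
      using line assms by (intro equivalent_norm_triangle C0_scale)
    finally show ?thesis using equivalent_norm_scale[OF assms(2)] by simp
  qed
  then show "(N h)-lipschitz_on A (\<lambda>r. N (\<lambda>s. e s + r * h s))"
    using equivalent_norm_nonneg[OF assms(2)]
    by (intro lipschitz_onI) (smt (verit, best) abs_minus_commute dist_real_def mult.commute)+
qed

end

lemma dual_space_linear:
  "\<phi> \<in> dual_space le N \<Longrightarrow> f \<in> C0 le \<Longrightarrow> g \<in> C0 le \<Longrightarrow>
    \<phi> (\<lambda>s. a * f s + b * g s) = a * \<phi> f + b * \<phi> g"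
  unfolding dual_space_def by blast

lemma dual_space_scale: "\<phi> \<in> dual_space le N \<Longrightarrow> f \<in> C0 le \<Longrightarrow> \<phi> (\<lambda>s. a * f s) = a * \<phi> f"
  using dual_space_linear[of \<phi> le N f f a 0] by simp

lemma dual_space_sum:
  assumes "\<phi> \<in> dual_space le N"
  shows "finite I \<Longrightarrow> (\<And>i. i \<in> I \<Longrightarrow> h i \<in> C0 le) \<Longrightarrow>
    \<phi> (\<lambda>s. \<Sum>i\<in>I. a i * h i s) = (\<Sum>i\<in>I. a i * \<phi> (h i))"
proof (induction I rule: finite_induct)
  case empty
  show ?case using dual_space_scale[OF assms C0_zero, of 0] by simp
next
  case (insert i I)
  have "\<phi> (\<lambda>s. a i * h i s + 1 * (\<Sum>i\<in>I. a i * h i s)) =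
      a i * \<phi> (h i) + 1 * \<phi> (\<lambda>s. \<Sum>i\<in>I. a i * h i s)"
    using insert by (intro dual_space_linear[OF assms] C0_sum) auto
  with insert show ?case by simp
qed

text \<open>The signed sums \<open>\<Sum>n<m. sgn (\<phi> (h n)) * h n\<close> stay uniformly bounded because the
  supports are disjoint, so the partial sums of \<open>\<Sum>n. \<bar>\<phi> (h n)\<bar>\<close> are bounded.\<close>
lemma disjoint_bounded_weakly_null:
  assumes norm: "equivalent_norm le N" and \<phi>: "\<phi> \<in> dual_space le N"
    and h: "\<And>n. h n \<in> C0 le" and bounded: "\<And>n s. \<bar>h n s\<bar> \<le> H"
    and disjoint: "\<And>n k s. n \<noteq> k \<Longrightarrow> h n s \<noteq> 0 \<Longrightarrow> h k s = 0"
  shows "(\<lambda>n. \<phi> (h n)) \<longlonglongrightarrow> 0"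
proof -
  obtain K where K: "\<And>f. f \<in> C0 le \<Longrightarrow> \<bar>\<phi> f\<bar> \<le> K * N f"
    using \<phi> unfolding dual_space_def by blast
  obtain L where L: "\<And>f B. f \<in> C0 le \<Longrightarrow> (\<And>s. \<bar>f s\<bar> \<le> B) \<Longrightarrow> N f \<le> L * B"
    using equivalent_norm_sup_bound[OF norm] by blast
  have "0 \<le> H" using bounded[of 0 undefined] by linarith
  have partial_sums: "(\<Sum>n<m. \<bar>\<phi> (h n)\<bar>) \<le> \<bar>K\<bar> * (L * H)" for m
  proof -
    define g where "g = (\<lambda>s. \<Sum>n<m. sgn (\<phi> (h n)) * h n s)"
    have g: "g \<in> C0 le" unfolding g_def using h by (intro C0_sum) auto
    have "\<bar>g s\<bar> \<le> H" for s
    proof (cases "\<exists>k<m. h k s \<noteq> 0")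
      case True
      then obtain k where "k < m" "h k s \<noteq> 0" by blast
      then have "g s = sgn (\<phi> (h k)) * h k s"
        unfolding g_def using disjoint[of k _ s]
        by (subst sum.remove[of _ k]) (auto intro!: sum.neutral)
      then show ?thesis using bounded[of k s] \<open>0 \<le> H\<close> by (simp add: abs_mult abs_sgn_eq)
    qed (use bounded[of 0 s] in \<open>simp add: g_def\<close>)
    then have "N g \<le> L * H" by (rule L[OF g])
    have "\<phi> g = (\<Sum>n<m. sgn (\<phi> (h n)) * \<phi> (h n))"
      unfolding g_def using h by (intro dual_space_sum[OF \<phi>]) auto
    also have "\<dots> = (\<Sum>n<m. \<bar>\<phi> (h n)\<bar>)" by (intro sum.cong refl) (simp add: sgn_if)
    finally have "(\<Sum>n<m. \<bar>\<phi> (h n)\<bar>) \<le> K * N g" using K[OF g] by simp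
    also have "\<dots> \<le> \<bar>K\<bar> * (L * H)"
      using \<open>N g \<le> L * H\<close> equivalent_norm_nonneg[OF norm g]
      by (smt (verit) abs_ge_self abs_ge_zero mult_left_mono mult_right_mono)
    finally show ?thesis .
  qed
  have "summable (\<lambda>n. \<bar>\<phi> (h n)\<bar>)"
    by (rule summableI_nonneg_bounded[OF _ partial_sums]) simp
  then have "(\<lambda>n. \<bar>\<phi> (h n)\<bar>) \<longlonglongrightarrow> 0" by (rule summable_LIMSEQ_zero)
  then show ?thesis by (simp add: tendsto_rabs_zero_iff)
qed

lemma dual_space_weakly_null_perturbation:
  assumes \<phi>: "\<phi> \<in> dual_space le N" and e: "e \<in> C0 le" and h: "\<And>n. h n \<in> C0 le"
    and weakly_null: "(\<lambda>n. \<phi> (h n)) \<longlonglongrightarrow> 0"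
    and a: "a \<longlonglongrightarrow> a0" and b: "\<And>n. \<bar>b n\<bar> \<le> B"
  shows "(\<lambda>n. \<phi> (\<lambda>s. a n * e s + b n * h n s)) \<longlonglongrightarrow> a0 * \<phi> e"
proof -
  have "(\<lambda>n. b n * \<phi> (h n)) \<longlonglongrightarrow> 0"
  proof (rule tendsto_0_le[OF weakly_null, of _ B], intro always_eventually allI)
    show "norm (b n * \<phi> (h n)) \<le> norm (\<phi> (h n)) * B" for n
      using b[of n] by (simp add: abs_mult mult.commute mult_right_mono)
  qed
  with a have "(\<lambda>n. a n * \<phi> e + b n * \<phi> (h n)) \<longlonglongrightarrow> a0 * \<phi> e + 0"
    by (intro tendsto_intros)
  then show ?thesis using dual_space_linear[OF \<phi> e h] by simp
qed

section \<open>The Kadec property\<close>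

lemma kadec_weak_limit_norm_limit:
  assumes kadec: "kadec le N" and norm: "equivalent_norm le N"
    and w: "\<And>n. w n \<in> C0 le" "\<And>n. N (w n) = 1" and y: "y \<in> C0 le" "N y = 1"
    and weak: "\<And>\<phi>. \<phi> \<in> dual_space le N \<Longrightarrow> (\<lambda>n. \<phi> (w n)) \<longlonglongrightarrow> \<phi> y"
  shows "(\<lambda>n. N (\<lambda>s. w n s - y s)) \<longlonglongrightarrow> 0"
proof (rule tendstoI)
  fix r :: real
  assume "r > 0"
  define S where "S = {f \<in> C0 le. N f = 1}"
  define B where "B = {g \<in> C0 le. N (\<lambda>s. g s - y s) < r}"
  have "openin (norm_topology le N) B"
    unfolding norm_topology_def B_def using y(1) \<open>r > 0\<close> by (intro topology_generated_by_Basis) blast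
  then have "openin (subtopology (norm_topology le N) S) (B \<inter> S)"
    by (auto simp: openin_subtopology)
  then have "openin (subtopology (weak_topology le N) S) (B \<inter> S)"
    using kadec unfolding kadec_def S_def by simp
  then obtain W where W: "openin (weak_topology le N) W" and BW: "B \<inter> S = W \<inter> S"
    unfolding openin_subtopology by blast
  have "y \<in> B \<inter> S"
    using y \<open>r > 0\<close> equivalent_norm_zero[OF norm] unfolding B_def S_def by simp
  then have "y \<in> W" using BW by blast
  have "eventually (\<lambda>n. w n \<in> W) sequentially"
    using W[unfolded weak_topology_def] \<open>y \<in> W\<close>
  proof (rule eventually_in_topology_generated_by)
    fix U
    assume "U \<in> {{g \<in> C0 le. \<phi> g \<in> V} | \<phi> V. \<phi> \<in> dual_space le N \<and> open V}" and "y \<in> U"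
    then obtain \<phi> V where U: "U = {g \<in> C0 le. \<phi> g \<in> V}" "\<phi> \<in> dual_space le N" "open V"
      by blast
    then have "eventually (\<lambda>n. \<phi> (w n) \<in> V) sequentially"
      using topological_tendstoD[OF weak[OF U(2)] U(3)] \<open>y \<in> U\<close> by blast
    then show "eventually (\<lambda>n. w n \<in> U) sequentially"
      by eventually_elim (simp add: U w)
  qed
  then show "eventually (\<lambda>n. dist (N (\<lambda>s. w n s - y s)) 0 < r) sequentially"
  proof eventually_elim
    case (elim n)
    then have "w n \<in> B" using BW w unfolding S_def by blast
    then show ?case
      using equivalent_norm_nonneg[OF norm C0_diff[OF w(1) y(1)]] unfolding B_def by simp
  qed
qed

lemma kadec_weak_limit_uniform_limit:
  assumes kadec: "kadec le N" and norm: "equivalent_norm le N"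
    and w: "\<And>n. w n \<in> C0 le" "\<And>n. N (w n) = 1" and y: "y \<in> C0 le" "N y = 1"
    and weak: "\<And>\<phi>. \<phi> \<in> dual_space le N \<Longrightarrow> (\<lambda>n. \<phi> (w n)) \<longlonglongrightarrow> \<phi> y"
  shows "(\<lambda>n. w n (u n) - y (u n)) \<longlonglongrightarrow> 0"
proof -
  obtain c where c: "c > 0" "\<And>f s. f \<in> C0 le \<Longrightarrow> c * \<bar>f s\<bar> \<le> N f"
    using equivalent_norm_pointwise_bound[OF norm] by blast
  have "(\<lambda>n. N (\<lambda>s. w n s - y s)) \<longlonglongrightarrow> 0"
    using kadec_weak_limit_norm_limit[where w = w and y = y, OF kadec norm w y] weak by blast
  then show ?thesis
  proof (rule tendsto_0_le[where K = "1 / c"], intro always_eventually allI)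
    fix n
    have "c * \<bar>w n (u n) - y (u n)\<bar> \<le> N (\<lambda>s. w n s - y s)"
      by (rule c(2)[OF C0_diff[OF w(1) y(1)]])
    then show "norm (w n (u n) - y (u n)) \<le> norm (N (\<lambda>s. w n s - y s)) * (1 / c)"
      using c(1) by (simp add: field_simps)
  qed
qed

text \<open>For large \<open>r\<close> the peak of \<open>r h\<close> at \<open>u\<close> forces \<open>N (e + r h) \<ge> N e\<close>, so the
  intermediate value theorem brings \<open>N (e + r h)\<close> into \<open>[N e, max (N e) (N (e + h))]\<close>.\<close>
lemma equivalent_norm_rescale_bump:
  assumes norm: "equivalent_norm le N"
    and c: "c > 0" "\<And>f s. f \<in> C0 le \<Longrightarrow> c * \<bar>f s\<bar> \<le> N f"
    and e: "e \<in> C0 le" "e u = 0" and h: "h \<in> C0 le" "h u = 1"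
  obtains r where "1 \<le> r" "r \<le> max 1 (N e / c)" "N e \<le> N (\<lambda>s. e s + r * h s)"
    "N (\<lambda>s. e s + r * h s) \<le> max (N e) (N (\<lambda>s. e s + h s))"
proof -
  define g where "g = (\<lambda>r. N (\<lambda>s. e s + r * h s))"
  define R where "R = max 1 (N e / c)"
  have "c * \<bar>e u + R * h u\<bar> \<le> g R"
    unfolding g_def by (rule c(2)[OF C0_add[OF e(1) C0_scale[OF h(1)]]])
  moreover have "\<bar>e u + R * h u\<bar> = R" using e(2) h(2) unfolding R_def by simp
  moreover have "N e = c * (N e / c)" using c(1) by simp
  moreover have "c * (N e / c) \<le> c * R" unfolding R_def using c(1) by (intro mult_left_mono) auto
  ultimately have "N e \<le> g R" by simp
  show thesis
  proof (cases "N e \<le> g 1")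
    case True
    then show thesis by (intro that[of 1]) (auto simp: g_def)
  next
    case False
    have "continuous_on {1..R} g"
      unfolding g_def using e(1) h(1) by (rule continuous_on_equivalent_norm_line[OF norm])
    then obtain r where "1 \<le> r" "r \<le> R" "g r = N e"
      using IVT'[of g 1 "N e" R] False \<open>N e \<le> g R\<close> by (force simp: R_def)
    then show thesis by (intro that[of r]) (auto simp: g_def R_def)
  qed
qed

lemma rescaled_bumps_norm_limit:
  assumes norm: "equivalent_norm le N" and e: "e \<in> C0 le" and h: "\<And>n. h n \<in> C0 le"
    and peak: "\<And>n. e (u n) = 0" "\<And>n. h n (u n) = 1"
    and almost_norming: "\<And>n. N (\<lambda>s. e s + h n s) \<le> N e + d n" and "d \<longlonglongrightarrow> 0"
  obtains r R where "\<And>n. 1 \<le> r n" "\<And>n. r n \<le> R" "\<And>n. N e \<le> N (\<lambda>s. e s + r n * h n s)"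
    "(\<lambda>n. N (\<lambda>s. e s + r n * h n s)) \<longlonglongrightarrow> N e"
proof -
  obtain c where c: "c > 0" "\<And>f s. f \<in> C0 le \<Longrightarrow> c * \<bar>f s\<bar> \<le> N f"
    using equivalent_norm_pointwise_bound[OF norm] by blast
  define R where "R = max 1 (N e / c)"
  have "\<forall>n. \<exists>r. 1 \<le> r \<and> r \<le> R \<and> N e \<le> N (\<lambda>s. e s + r * h n s) \<and>
      N (\<lambda>s. e s + r * h n s) \<le> max (N e) (N (\<lambda>s. e s + h n s))"
    using equivalent_norm_rescale_bump[OF norm c e peak(1) h peak(2)] unfolding R_def by metis
  then obtain r where "\<forall>n. 1 \<le> r n \<and> r n \<le> R \<and> N e \<le> N (\<lambda>s. e s + r n * h n s) \<and>
      N (\<lambda>s. e s + r n * h n s) \<le> max (N e) (N (\<lambda>s. e s + h n s))"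
    by (rule choice[THEN exE])
  then have r: "\<And>n. 1 \<le> r n" "\<And>n. r n \<le> R" "\<And>n. N e \<le> N (\<lambda>s. e s + r n * h n s)"
    and upper: "\<And>n. N (\<lambda>s. e s + r n * h n s) \<le> max (N e) (N (\<lambda>s. e s + h n s))"
    by auto
  have "(\<lambda>n. N (\<lambda>s. e s + r n * h n s)) \<longlonglongrightarrow> N e"
  proof (rule tendsto_sandwich[of "\<lambda>n. N e" _ _ "\<lambda>n. N e + max 0 (d n)"])
    show "eventually (\<lambda>n. N (\<lambda>s. e s + r n * h n s) \<le> N e + max 0 (d n)) sequentially"
      using upper almost_norming
      by (intro always_eventually allI) (smt (verit) max.cobounded2 max_def)
    show "(\<lambda>n. N e + max 0 (d n)) \<longlonglongrightarrow> N e"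
      using tendsto_add[OF tendsto_const[of "N e"] tendsto_max[OF tendsto_const[of 0] \<open>d \<longlonglongrightarrow> 0\<close>]]
      by simp
  qed (use r(3) in auto)
  with r show thesis by (rule that)
qed

text \<open>Normalised, the vectors \<open>e + r n * h n\<close> converge weakly to \<open>e / N e\<close> but keep a
  peak of height at least \<open>1 / N (e + r n * h n) \<longlonglongrightarrow> 1 / N e\<close> at \<open>u n\<close>.\<close>
lemma weakly_null_bumps_not_kadec:
  assumes norm: "equivalent_norm le N" and e: "e \<in> C0 le" "N e > 0"
    and h: "\<And>n. h n \<in> C0 le"
    and weakly_null: "\<And>\<phi>. \<phi> \<in> dual_space le N \<Longrightarrow> (\<lambda>n. \<phi> (h n)) \<longlonglongrightarrow> 0"
    and peak: "\<And>n. e (u n) = 0" "\<And>n. h n (u n) = 1"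
    and almost_norming: "\<And>n. N (\<lambda>s. e s + h n s) \<le> N e + d n" and "d \<longlonglongrightarrow> 0"
  shows "\<not> kadec le N"
proof
  assume kadec: "kadec le N"
  obtain r R where r: "\<And>n. 1 \<le> r n" "\<And>n. r n \<le> R"
    and \<nu>_lower: "\<And>n. N e \<le> N (\<lambda>s. e s + r n * h n s)"
    and \<nu>_limit: "(\<lambda>n. N (\<lambda>s. e s + r n * h n s)) \<longlonglongrightarrow> N e"
    using rescaled_bumps_norm_limit[OF norm e(1) h peak almost_norming \<open>d \<longlonglongrightarrow> 0\<close>] by blast
  define \<nu> where "\<nu> n = N (\<lambda>s. e s + r n * h n s)" for n
  define w where "w = (\<lambda>n s. (1 / \<nu> n) * e s + (r n / \<nu> n) * h n s)"
  define y where "y = (\<lambda>s. (1 / N e) * e s)"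
  have \<nu>_pos: "\<nu> n > 0" for n using \<nu>_lower[of n] e(2) unfolding \<nu>_def by linarith
  have w_C0: "w n \<in> C0 le" for n
    unfolding w_def using e(1) h by (intro C0_add C0_scale)
  have w_norm: "N (w n) = 1" for n
  proof -
    have "w n = (\<lambda>s. (1 / \<nu> n) * (e s + r n * h n s))"
      unfolding w_def by (simp add: fun_eq_iff algebra_simps)
    then have "N (w n) = \<bar>1 / \<nu> n\<bar> * \<nu> n"
      unfolding \<nu>_def by (simp only: equivalent_norm_scale[OF norm C0_add[OF e(1) C0_scale[OF h]]])
    then show ?thesis using \<nu>_pos[of n] by simp
  qed
  have y_C0: "y \<in> C0 le" unfolding y_def by (rule C0_scale[OF e(1)])
  have y_norm: "N y = 1"
    unfolding y_def using equivalent_norm_scale[OF norm e(1), of "1 / N e"] e(2) by simp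
  have inv_limit: "(\<lambda>n. 1 / \<nu> n) \<longlonglongrightarrow> 1 / N e"
    using \<nu>_limit e(2) unfolding \<nu>_def by (intro tendsto_intros) auto
  have bounded: "\<bar>r n / \<nu> n\<bar> \<le> R / N e" for n
    using r[of n] \<nu>_lower[of n] \<nu>_pos[of n] e(2) unfolding \<nu>_def by (simp add: frac_le)
  have "(\<lambda>n. \<phi> (w n)) \<longlonglongrightarrow> \<phi> y" if "\<phi> \<in> dual_space le N" for \<phi>
    unfolding w_def y_def dual_space_scale[OF that e(1)]
    using dual_space_weakly_null_perturbation[where h = h and a = "\<lambda>n. 1 / \<nu> n" and b = "\<lambda>n. r n / \<nu> n",
        OF that e(1) h weakly_null[OF that] inv_limit bounded] .
  then have "(\<lambda>n. w n (u n) - y (u n)) \<longlonglongrightarrow> 0"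
    by (rule kadec_weak_limit_uniform_limit[where u = u, OF kadec norm w_C0 w_norm y_C0 y_norm])
  moreover note inv_limit
  moreover have "1 / \<nu> n \<le> w n (u n) - y (u n)" for n
    unfolding w_def y_def using peak r(1)[of n] \<nu>_pos[of n] by (simp add: divide_right_mono)
  ultimately have "1 / N e \<le> 0"
    by (intro tendsto_le[OF trivial_limit_sequentially]) (auto intro: always_eventually)
  with e(2) show False by simp
qed

section \<open>Bad points\<close>

lemma inj_seq_avoiding_finite:
  assumes "\<And>n F. finite F \<Longrightarrow> \<exists>x. x \<notin> F \<and> P n x"
  obtains X :: "nat \<Rightarrow> 'a" where "inj X" "\<And>n. P n (X n)"
proof -
  define pick where "pick n F = (SOME x. x \<notin> F \<and> P n x)" for n F
  define A where "A = rec_nat {} (\<lambda>k B. insert (pick k B) B)"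
  define X where "X n = pick n (A n)" for n
  have A_eq: "A n = X ` {..<n}" for n
    by (induction n) (simp_all add: A_def X_def lessThan_Suc)
  have X: "X n \<notin> A n \<and> P n (X n)" for n
    unfolding X_def pick_def by (rule someI_ex) (simp add: assms A_eq)
  have "X m \<noteq> X n" if "m < n" for m n
  proof
    assume "X m = X n"
    with that have "X n \<in> A n" unfolding A_eq by (metis imageI lessThan_iff)
    with X[of n] show False by blast
  qed
  then have "inj X" by (metis injI linorder_neqE_nat)
  with X show thesis using that by blast
qed

lemma bad_point_successor_below:
  assumes "bad_point le \<rho> t" "finite F" "\<delta> > 0"
  shows "\<exists>u. u \<notin> F \<and> u \<in> succs le t \<and> \<rho> u < \<rho> t + \<delta>"
proof -
  have "\<not> (INF u\<in>succs le t - F \<inter> succs le t. ereal (\<rho> u)) > ereal (\<rho> t)"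
    using assms(1,2) unfolding bad_point_def good_point_def by blast
  then have "(INF u\<in>succs le t - F \<inter> succs le t. ereal (\<rho> u)) < ereal (\<rho> t + \<delta>)"
    using \<open>\<delta> > 0\<close> by (smt (verit) ereal_less_eq(3) linorder_not_less order.strict_trans1)
  then show ?thesis by (auto simp: INF_less_iff)
qed

lemma mu_approx:
  assumes "\<epsilon> > 0"
  shows "\<exists>f. f \<in> C0 le \<and> {s. f s \<noteq> 0} \<subseteq> {v. lt_of le u v} \<and>
    N (\<lambda>s. (if le s u then 1 else 0) + f s) < mu le N u + \<epsilon>"
proof -
  let ?X = "{N (\<lambda>s. (if le s u then 1 else 0) + f s) | f.
    f \<in> C0 le \<and> {s. f s \<noteq> 0} \<subseteq> {v. lt_of le u v}}"
  have "?X \<noteq> {}" using C0_zero by fastforce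
  from cInf_lessD[OF this, of "Inf ?X + \<epsilon>"] assms show ?thesis
    unfolding mu_def by auto
qed

lemma successor_bump:
  fixes f :: "'a \<Rightarrow> real"
  assumes "is_tree le" "u \<in> succs le t" "{s. f s \<noteq> 0} \<subseteq> {v. lt_of le u v}"
  shows "(if le s u then 1 else 0) + f s =
      (if le s t then 1 else 0) + ((if s = u then 1 else 0) + f s)"
    and "(if s = u then 1 else 0) + f s \<noteq> 0 \<Longrightarrow> le u s"
    and "f u = 0"
proof -
  show "(if le s u then 1 else 0) + f s =
      (if le s t then 1 else 0) + ((if s = u then 1 else 0) + f s)"
    using succs_downset_iff[OF assms(1,2)] succs_not_le[OF assms(2)] by auto
  show "(if s = u then 1 else 0) + f s \<noteq> 0 \<Longrightarrow> le u s"
    using assms(3) tree_refl[OF assms(1)] unfolding lt_of_def by (cases "s = u") auto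
  show "f u = 0"
    using assms(3) unfolding lt_of_def by auto
qed

context
  fixes le :: "'a \<Rightarrow> 'a \<Rightarrow> bool" and N :: "('a \<Rightarrow> real) \<Rightarrow> real"
  assumes haus: "hausdorff_tree le" and norm: "equivalent_norm le N"
begin

lemma mu_le_norm:
  assumes "f \<in> C0 le" "{s. f s \<noteq> 0} \<subseteq> {v. lt_of le u v}"
  shows "mu le N u \<le> N (\<lambda>s. (if le s u then 1 else 0) + f s)"
  unfolding mu_def
proof (rule cInf_lower)
  show "bdd_below {N (\<lambda>s. (if le s u then 1 else 0) + f s) | f.
      f \<in> C0 le \<and> {s. f s \<noteq> 0} \<subseteq> {v. lt_of le u v}}"
    using equivalent_norm_nonneg[OF norm C0_add[OF downset_indicator_C0[OF haus]]]
    by (intro bdd_belowI[of _ 0]) blast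
qed (use assms in blast)

lemma bad_point_successor_sequence:
  assumes "bad_point le (mu le N) t"
  obtains u f where "inj u" "\<And>n. u n \<in> succs le t" "\<And>n. f n \<in> C0 le"
    "\<And>n. {s. f n s \<noteq> 0} \<subseteq> {v. lt_of le (u n) v}"
    "\<And>n. N (\<lambda>s. (if le s (u n) then 1 else 0) + f n s) < mu le N t + 2 / real (Suc n)"
proof -
  have "\<exists>x. x \<notin> F \<and> x \<in> succs le t \<and> mu le N x < mu le N t + 1 / real (Suc n)"
    if "finite F" for n F
    using bad_point_successor_below[OF assms that] by simp
  then obtain u where "inj u"
    and u: "\<And>n. u n \<in> succs le t \<and> mu le N (u n) < mu le N t + 1 / real (Suc n)"
    using inj_seq_avoiding_finite[where P = "\<lambda>n x. x \<in> succs le t \<and>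
        mu le N x < mu le N t + 1 / real (Suc n)"] by blast
  have "\<forall>n. \<exists>f. f \<in> C0 le \<and> {s. f s \<noteq> 0} \<subseteq> {v. lt_of le (u n) v} \<and>
      N (\<lambda>s. (if le s (u n) then 1 else 0) + f s) < mu le N (u n) + 1 / real (Suc n)"
    by (intro allI mu_approx) simp
  then obtain f where f: "\<forall>n. f n \<in> C0 le \<and> {s. f n s \<noteq> 0} \<subseteq> {v. lt_of le (u n) v} \<and>
      N (\<lambda>s. (if le s (u n) then 1 else 0) + f n s) < mu le N (u n) + 1 / real (Suc n)"
    by (rule choice[THEN exE])
  show thesis
  proof (rule that[OF \<open>inj u\<close>])
    fix n
    have "N (\<lambda>s. (if le s (u n) then 1 else 0) + f n s) < mu le N (u n) + 1 / real (Suc n)"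
      using f by blast
    moreover have "mu le N (u n) < mu le N t + 1 / real (Suc n)" using u by blast
    ultimately have "N (\<lambda>s. (if le s (u n) then 1 else 0) + f n s)
        < mu le N t + (1 / real (Suc n) + 1 / real (Suc n))"
      by linarith
    then show "N (\<lambda>s. (if le s (u n) then 1 else 0) + f n s) < mu le N t + 2 / real (Suc n)"
      by simp
  qed (use f u in auto)
qed

lemma bad_point_disjoint_bumps:
  assumes "bad_point le (mu le N) t"
  obtains h u where "\<And>n. h n \<in> C0 le" "\<And>n k s. n \<noteq> k \<Longrightarrow> h n s \<noteq> 0 \<Longrightarrow> h k s = 0"
    "\<And>n. \<not> le (u n) t" "\<And>n. h n (u n) = 1"
    "\<And>n. N (\<lambda>s. (if le s t then 1 else 0) + h n s)
      \<le> N (\<lambda>s. if le s t then 1 else 0) + 2 / real (Suc n)"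
proof -
  have tree: "is_tree le" by (rule hausdorff_treeD[OF haus])
  obtain u f where "inj u" and u: "\<And>n. u n \<in> succs le t" and f: "\<And>n. f n \<in> C0 le"
    and f_supp: "\<And>n. {s. f n s \<noteq> 0} \<subseteq> {v. lt_of le (u n) v}"
    and almost: "\<And>n. N (\<lambda>s. (if le s (u n) then 1 else 0) + f n s) < mu le N t + 2 / real (Suc n)"
    using bad_point_successor_sequence[OF assms] by blast
  define e where "e = (\<lambda>s. if le s t then 1 else 0 :: real)"
  define h where "h = (\<lambda>n s. (if s = u n then 1 else 0) + f n s)"
  have x_eq: "(\<lambda>s. (if le s (u n) then 1 else 0) + f n s) = (\<lambda>s. e s + h n s)" for n
    unfolding e_def h_def by (rule ext) (rule successor_bump(1)[OF tree u f_supp])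
  have h_supp: "le (u n) s" if "h n s \<noteq> 0" for n s
    using successor_bump(2)[OF tree u f_supp] that unfolding h_def by blast
  have h_peak: "h n (u n) = 1" for n
    using successor_bump(3)[OF tree u f_supp] unfolding h_def by simp
  have e: "e \<in> C0 le" unfolding e_def by (rule downset_indicator_C0[OF haus])
  have "(\<lambda>s. e s + h n s) \<in> C0 le" for n
    unfolding x_eq[symmetric] by (rule C0_add[OF downset_indicator_C0[OF haus] f])
  then have h: "h n \<in> C0 le" for n
    using C0_diff[OF _ e] by fastforce
  have disjoint: "h k s = 0" if "n \<noteq> k" "h n s \<noteq> 0" for n k s
    using h_supp[OF that(2)] h_supp[of k s] succs_common_upper_bound[OF tree u u]
      \<open>inj u\<close> that(1) by (meson injD)
  have "mu le N t \<le> N e"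
    using mu_le_norm[OF C0_zero, of t] by (simp add: e_def)
  then have "N (\<lambda>s. e s + h n s) \<le> N e + 2 / real (Suc n)" for n
    using almost[of n] unfolding x_eq by simp
  then have almost_e: "N (\<lambda>s. (if le s t then 1 else 0) + h n s)
      \<le> N (\<lambda>s. if le s t then 1 else 0) + 2 / real (Suc n)" for n
    unfolding e_def .
  show thesis
    by (rule that[of h u, OF h disjoint succs_not_le[OF u] h_peak almost_e])
qed

lemma bad_point_weakly_null_bumps:
  assumes "bad_point le (mu le N) t"
  obtains h u where "\<And>n. h n \<in> C0 le"
    "\<And>\<phi>. \<phi> \<in> dual_space le N \<Longrightarrow> (\<lambda>n. \<phi> (h n)) \<longlonglongrightarrow> 0"
    "\<And>n. \<not> le (u n) t" "\<And>n. h n (u n) = 1"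
    "\<And>n. N (\<lambda>s. (if le s t then 1 else 0) + h n s)
      \<le> N (\<lambda>s. if le s t then 1 else 0) + 2 / real (Suc n)"
proof (rule bad_point_disjoint_bumps[OF assms])
  fix h u
  assume h: "\<And>n. h n \<in> C0 le"
    and disjoint: "\<And>n k s. n \<noteq> k \<Longrightarrow> h n s \<noteq> 0 \<Longrightarrow> h k s = 0"
    and peak: "\<And>n. \<not> le (u n) t" "\<And>n. h n (u n) = 1"
    and almost: "\<And>n. N (\<lambda>s. (if le s t then 1 else 0) + h n s)
      \<le> N (\<lambda>s. if le s t then 1 else 0) + 2 / real (Suc n)"
  define e where "e = (\<lambda>s. if le s t then 1 else 0 :: real)"
  have e: "e \<in> C0 le" unfolding e_def by (rule downset_indicator_C0[OF haus])
  obtain c where c: "c > 0" "\<And>f s. f \<in> C0 le \<Longrightarrow> c * \<bar>f s\<bar> \<le> N f"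
    using equivalent_norm_pointwise_bound[OF norm] by blast
  have bounded: "\<bar>h n s\<bar> \<le> (N e + 2) / c + 1" for n s
  proof -
    have "2 / real (Suc n) \<le> 2" by (simp add: divide_le_eq)
    then have "c * \<bar>e s + h n s\<bar> \<le> N e + 2"
      using c(2)[OF C0_add[OF e h[of n]], of s] almost[of n] unfolding e_def by linarith
    then have "\<bar>e s + h n s\<bar> \<le> (N e + 2) / c" using c(1) by (simp add: field_simps)
    moreover have "\<bar>e s\<bar> \<le> 1" unfolding e_def by simp
    ultimately show ?thesis by linarith
  qed
  show thesis
  proof (rule that[of h u, OF h _ peak almost])
    show "(\<lambda>n. \<phi> (h n)) \<longlonglongrightarrow> 0" if "\<phi> \<in> dual_space le N" for \<phi>
      by (rule disjoint_bounded_weakly_null[OF norm that h bounded disjoint])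
  qed
qed

end

theorem proposition3p2:
  fixes le :: "'a \<Rightarrow> 'a \<Rightarrow> bool" and N :: "('a \<Rightarrow> real) \<Rightarrow> real"
  assumes "hausdorff_tree le"
    and "equivalent_norm le N"
    and "kadec le N"
  shows "\<forall>t. \<not> bad_point le (mu le N) t"
proof (intro allI notI)
  fix t
  assume bad: "bad_point le (mu le N) t"
  let ?e = "\<lambda>s. if le s t then 1 else 0 :: real"
  have e: "?e \<in> C0 le" by (rule downset_indicator_C0[OF assms(1)])
  have "N ?e > 0"
    using equivalent_norm_pos[OF assms(2) e, of t] tree_refl[OF hausdorff_treeD[OF assms(1)]]
    by simp
  show False
  proof (rule bad_point_weakly_null_bumps[OF assms(1,2) bad])
    fix h u
    assume h: "\<And>n. h n \<in> C0 le" "\<And>\<phi>. \<phi> \<in> dual_space le N \<Longrightarrow> (\<lambda>n. \<phi> (h n)) \<longlonglongrightarrow> 0"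
      and peak: "\<And>n. \<not> le (u n) t" "\<And>n. h n (u n) = 1"
      and almost_norming: "\<And>n. N (\<lambda>s. ?e s + h n s) \<le> N ?e + 2 / real (Suc n)"
    have "\<not> kadec le N"
      using weakly_null_bumps_not_kadec[where h = h and u = u, OF assms(2) e \<open>N ?e > 0\<close> h _ peak(2)
          almost_norming LIMSEQ_Suc[OF lim_const_over_n]] peak(1) by simp
    with assms(3) show False by contradiction
  qed
qed

end
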